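(* Let $\langle X,\tau,T\rangle$ be a conditional space and $\mathrm{Cm}=\langle\mathcal{P}(X),\to_T\rangle$ its full complex algebra. With $x,y,z$ ranging over $X$ and $Y,Z$ over closed subsets of $X$, and the inequalities in $\mathrm{Cm}$ holding for all elements: (T3* ) $(a\to c)\wedge(b\to c)\le(a\vee b)\to c$ holds in $\mathrm{Cm}$ iff for all $x,y$ and nonempty $Y$, $T(x,Y,y)$ implies there is $z\in Y$ with $T(x,\{z\},y)$; (T4) $a\to b\le c\to(a\to b)$ holds in $\mathrm{Cm}$ iff $T(x,Y,y)$ and $T(y,Z,z)$ imply $T(x,Z,z)$; (T5) $a\wedge(a\to b)\le b$ holds in $\mathrm{Cm}$ iff $T(x,\{x\},x)$ for all $x$; (T6) $a\to b\le\neg b\to\neg a$ holds in $\mathrm{Cm}$ iff $T(x,Y,y)$ implies there is $z\in Y$ with $T(x,\{y\},z)$; (T7) $\neg(a\to b)\le c\to\neg(a\to b)$ holds in $\mathrm{Cm}$ iff $T(x,Y,y)$ and $T(x,Z,z)$ imply $T(y,Z,z)$; (T8) $(1\to(\neg a\vee b))\wedge(b\to c)\le a\to c$ holds in $\mathrm{Cm}$ iff for all $x,y,Y,Z$: $T(x,Y,y)$ and $T(x,X)\cap Y\subseteq Z$ imply $T(x,Z,y)$.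
   Context: A conditional space is $\langle X,\tau,T\rangle$ with $\langle X,\tau\rangle$ a Boolean (compact, Hausdorff, zero-dimensional) space and $T\subseteq X\times\mathcal{C}(\tau)\times X$ ($\mathcal{C}(\tau)$ the closed sets) satisfying: (T1) $T(x,Y)=\{y:T(x,Y,y)\}$ is closed for all $x$ and closed $Y$; (T2) for clopen $U,V$, $U\to_T V$ is clopen; (T3) for closed $Y$, $T(x,Y,y)$ iff $T(x,U,y)$ for all clopen $U\supseteq Y$. For any $U,V\subseteq X$, $U\to_T V=\{x\in X:\text{for all closed } Z\subseteq U,\ T(x,Z)\subseteq V\}$. In $\mathrm{Cm}$, $\wedge,\vee,\neg,1$ are intersection, union, complement and $X$. *)

theory Defs
  imports "HOL-Analysis.Analysis"
begin

text \<open>The Boolean space is the whole carrier UNIV of a topological type 'a;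
  the ternary relation T is a predicate on points, (closed) sets, points.\<close>

definition zero_dimensional_space :: "'a::topological_space itself \<Rightarrow> bool" where
  "zero_dimensional_space _ \<longleftrightarrow>
     (\<forall>U::'a set. open U \<longrightarrow> (\<exists>B. (\<forall>b\<in>B. open b \<and> closed b) \<and> U = \<Union>B))"

definition boolean_space :: "'a::topological_space itself \<Rightarrow> bool" where
  "boolean_space t \<longleftrightarrow> compact (UNIV::'a set)
     \<and> (\<forall>x y::'a. x \<noteq> y \<longrightarrow> (\<exists>U V. open U \<and> open V \<and> x \<in> U \<and> y \<in> V \<and> U \<inter> V = {}))
     \<and> zero_dimensional_space t"

definition Tset :: "('a \<Rightarrow> 'a set \<Rightarrow> 'a \<Rightarrow> bool) \<Rightarrow> 'a \<Rightarrow> 'a set \<Rightarrow> 'a set" where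
  "Tset T x Y = {y. T x Y y}"

definition cond_arrow :: "('a::topological_space \<Rightarrow> 'a set \<Rightarrow> 'a \<Rightarrow> bool) \<Rightarrow> 'a set \<Rightarrow> 'a set \<Rightarrow> 'a set" where
  "cond_arrow T U V = {x. \<forall>Z. closed Z \<and> Z \<subseteq> U \<longrightarrow> Tset T x Z \<subseteq> V}"

definition conditional_space :: "('a::topological_space \<Rightarrow> 'a set \<Rightarrow> 'a \<Rightarrow> bool) \<Rightarrow> bool" where
  "conditional_space T \<longleftrightarrow> boolean_space TYPE('a)
     \<and> (\<forall>x Y y. T x Y y \<longrightarrow> closed Y)
     \<and> (\<forall>x Y. closed Y \<longrightarrow> closed (Tset T x Y))
     \<and> (\<forall>U V. open U \<and> closed U \<and> open V \<and> closed V \<longrightarrow>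
          open (cond_arrow T U V) \<and> closed (cond_arrow T U V))
     \<and> (\<forall>x Y y. closed Y \<longrightarrow>
          (T x Y y \<longleftrightarrow> (\<forall>U. open U \<and> closed U \<and> Y \<subseteq> U \<longrightarrow> T x U y)))"

end

theory Submission
  imports Defs
begin

text \<open>For a closed antecedent \<open>Y\<close>, monotonicity of \<open>T\<close> in its set argument (a consequence
  of (T3)) gives \<open>x \<in> Y \<rightarrow> b\<close> iff \<open>T(x,Y) \<subseteq> b\<close>. Each law can therefore be tested on the
  elements \<open>Y \<rightarrow> T(x,Y)\<close> with \<open>Y\<close> closed (often a singleton), and each frame condition
  is recovered by a one-step argument. The exception is (T3*): there compactness reduces a closed
  \<open>Y\<close> to finitely many clopen sets \<open>U\<close> with \<open>\<not> T(x,U,y)\<close>, which cover \<open>Y\<close> because, by (T3),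
  \<open>\<not> T(x,{z},y)\<close> is witnessed by a clopen neighbourhood of \<open>z\<close>.\<close>

lemma mem_Tset_iff [simp]: "y \<in> Tset T x Y \<longleftrightarrow> T x Y y"
  by (simp add: Tset_def)

lemma cond_arrowD: "x \<in> cond_arrow T a b \<Longrightarrow> closed Z \<Longrightarrow> Z \<subseteq> a \<Longrightarrow> T x Z y \<Longrightarrow> y \<in> b"
  unfolding cond_arrow_def Tset_def by blast

lemma cond_arrowI:
  "(\<And>Z y. closed Z \<Longrightarrow> Z \<subseteq> a \<Longrightarrow> T x Z y \<Longrightarrow> y \<in> b) \<Longrightarrow> x \<in> cond_arrow T a b"
  unfolding cond_arrow_def Tset_def by blast

lemma cond_arrow_antimono: "a \<subseteq> a' \<Longrightarrow> cond_arrow T a' c \<subseteq> cond_arrow T a c"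
  unfolding cond_arrow_def by blast

lemma cond_arrow_Union:
  assumes sup: "\<forall>a b. cond_arrow T a c \<inter> cond_arrow T b c \<subseteq> cond_arrow T (a \<union> b) c"
    and "finite F" "F \<noteq> {}" "\<forall>U\<in>F. x \<in> cond_arrow T U c"
  shows "x \<in> cond_arrow T (\<Union>F) c"
  using assms(2-4) by (induction F rule: finite_ne_induct) (use sup in auto)

lemma conditional_space_compact:
  "conditional_space (T :: 'a::topological_space \<Rightarrow> _) \<Longrightarrow> compact (UNIV :: 'a set)"
  unfolding conditional_space_def boolean_space_def by blast

lemma conditional_space_closed_singleton:
  assumes "conditional_space (T :: 'a::topological_space \<Rightarrow> _)"
  shows "closed {z :: 'a}"
proof -
  have sep: "\<forall>x y :: 'a. x \<noteq> y \<longrightarrow> (\<exists>U V. open U \<and> open V \<and> x \<in> U \<and> y \<in> V \<and> U \<inter> V = {})"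
    using assms unfolding conditional_space_def boolean_space_def by simp
  have "open (- {z})"
  proof (subst open_subopen, intro ballI)
    fix w assume "w \<in> - {z}"
    then obtain U V where "open U" "open V" "z \<in> U" "w \<in> V" "U \<inter> V = {}"
      using sep by (metis ComplD singleton_iff)
    then show "\<exists>V. open V \<and> w \<in> V \<and> V \<subseteq> - {z}"
      by blast
  qed
  then show ?thesis
    by (simp add: closed_def)
qed

lemma conditional_space_closed_Tset:
  "conditional_space T \<Longrightarrow> closed Y \<Longrightarrow> closed (Tset T x Y)"
  unfolding conditional_space_def by simp

lemma conditional_space_T_iff_clopen:
  "conditional_space T \<Longrightarrow> closed Y \<Longrightarrow>
     T x Y y \<longleftrightarrow> (\<forall>U. open U \<and> closed U \<and> Y \<subseteq> U \<longrightarrow> T x U y)"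
  unfolding conditional_space_def by simp

lemma conditional_space_T_mono:
  assumes "conditional_space T" "closed Y" "closed Y'" "Y \<subseteq> Y'" "T x Y y"
  shows "T x Y' y"
  using assms conditional_space_T_iff_clopen[OF assms(1)] by (meson order_trans)

lemma mem_cond_arrow_closed_iff:
  assumes c: "conditional_space T" and a: "closed a"
  shows "x \<in> cond_arrow T a b \<longleftrightarrow> Tset T x a \<subseteq> b"
proof
  assume "x \<in> cond_arrow T a b"
  then show "Tset T x a \<subseteq> b"
    using cond_arrowD[OF _ a order_refl] by auto
next
  assume "Tset T x a \<subseteq> b"
  then show "x \<in> cond_arrow T a b"
    using conditional_space_T_mono[OF c _ a] by (auto intro!: cond_arrowI)
qed

lemma mem_cond_arrow_Tset:
  "conditional_space T \<Longrightarrow> closed a \<Longrightarrow> x \<in> cond_arrow T a (Tset T x a)"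
  by (simp add: mem_cond_arrow_closed_iff)

lemma singleton_witness_if_sup_law:
  assumes c: "conditional_space T"
    and sup: "\<forall>a b c. cond_arrow T a c \<inter> cond_arrow T b c \<subseteq> cond_arrow T (a \<union> b) c"
    and Y: "closed Y" "Y \<noteq> {}" "T x Y y"
  shows "\<exists>z\<in>Y. T x {z} y"
proof (rule ccontr)
  assume no_witness: "\<not> (\<exists>z\<in>Y. T x {z} y)"
  define \<U> where "\<U> = {U. open U \<and> closed U \<and> \<not> T x U y}"
  have "Y \<subseteq> \<Union>\<U>"
  proof
    fix z assume "z \<in> Y"
    then have "\<not> T x {z} y"
      using no_witness by blast
    then show "z \<in> \<Union>\<U>"
      using conditional_space_T_iff_clopen[OF c conditional_space_closed_singleton[OF c]]
      unfolding \<U>_def by blast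
  qed
  moreover have "compact Y"
    using compact_Int_closed[OF conditional_space_compact[OF c] Y(1)] by simp
  ultimately obtain F where F: "F \<subseteq> \<U>" "finite F" "Y \<subseteq> \<Union>F"
    using compactE[of Y \<U>] unfolding \<U>_def by blast
  have "\<forall>U\<in>F. x \<in> cond_arrow T U (- {y})"
    using F(1) by (auto simp: \<U>_def mem_cond_arrow_closed_iff[OF c])
  then have "x \<in> cond_arrow T (\<Union>F) (- {y})"
    using cond_arrow_Union[of T "- {y}"] sup F(2,3) Y(2) by blast
  then have "x \<in> cond_arrow T Y (- {y})"
    using cond_arrow_antimono[OF F(3)] by blast
  then show False
    using Y by (auto simp: mem_cond_arrow_closed_iff[OF c])
qed

lemma correspondence_T3_star:
  assumes c: "conditional_space T"
  shows "(\<forall>a b c. cond_arrow T a c \<inter> cond_arrow T b c \<subseteq> cond_arrow T (a \<union> b) c) \<longleftrightarrow>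
    (\<forall>x y Y. closed Y \<and> Y \<noteq> {} \<and> T x Y y \<longrightarrow> (\<exists>z\<in>Y. T x {z} y))"
proof (intro iffI allI impI subsetI)
  fix x y Y
  assume "\<forall>a b c. cond_arrow T a c \<inter> cond_arrow T b c \<subseteq> cond_arrow T (a \<union> b) c"
    and "closed Y \<and> Y \<noteq> {} \<and> T x Y y"
  then show "\<exists>z\<in>Y. T x {z} y"
    using singleton_witness_if_sup_law[OF c] by simp
next
  fix a b d x
  assume witness: "\<forall>x y Y. closed Y \<and> Y \<noteq> {} \<and> T x Y y \<longrightarrow> (\<exists>z\<in>Y. T x {z} y)"
    and x: "x \<in> cond_arrow T a d \<inter> cond_arrow T b d"
  show "x \<in> cond_arrow T (a \<union> b) d"
  proof (rule cond_arrowI)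
    fix Z y assume Z: "closed Z" "Z \<subseteq> a \<union> b" and "T x Z y"
    show "y \<in> d"
    proof (cases "Z = {}")
      case True
      then show ?thesis
        using cond_arrowD[of x T a d Z y] x Z \<open>T x Z y\<close> by simp
    next
      case False
      then have "\<exists>z\<in>Z. T x {z} y"
        using witness Z \<open>T x Z y\<close> by simp
      then obtain z where z: "z \<in> Z" "T x {z} y" ..
      then have "{z} \<subseteq> a \<or> {z} \<subseteq> b"
        using Z by auto
      then show ?thesis
        using cond_arrowD[of x T a d "{z}" y] cond_arrowD[of x T b d "{z}" y]
          conditional_space_closed_singleton[OF c] x z(2)
        by auto
    qed
  qed
qed

lemma correspondence_T4:
  assumes c: "conditional_space T"
  shows "(\<forall>a b c. cond_arrow T a b \<subseteq> cond_arrow T c (cond_arrow T a b)) \<longleftrightarrow>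
    (\<forall>x y z Y Z. closed Y \<and> closed Z \<and> T x Y y \<and> T y Z z \<longrightarrow> T x Z z)"
proof (intro iffI allI impI subsetI)
  fix x y z Y Z
  assume law: "\<forall>a b c. cond_arrow T a b \<subseteq> cond_arrow T c (cond_arrow T a b)"
    and h: "closed Y \<and> closed Z \<and> T x Y y \<and> T y Z z"
  have "x \<in> cond_arrow T Z (Tset T x Z)"
    using mem_cond_arrow_Tset[OF c] h by blast
  then have "x \<in> cond_arrow T Y (cond_arrow T Z (Tset T x Z))"
    using law by blast
  then have "y \<in> cond_arrow T Z (Tset T x Z)"
    using cond_arrowD[of x T Y _ Y y] h by blast
  then show "T x Z z"
    using cond_arrowD[of y T Z "Tset T x Z" Z z] h by simp
next
  fix a b d x
  assume trans: "\<forall>x y z Y Z. closed Y \<and> closed Z \<and> T x Y y \<and> T y Z z \<longrightarrow> T x Z z"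
    and x: "x \<in> cond_arrow T a b"
  show "x \<in> cond_arrow T d (cond_arrow T a b)"
  proof (intro cond_arrowI)
    fix Y y W z assume "closed Y" "T x Y y" "closed W" "W \<subseteq> a" "T y W z"
    then have "T x W z"
      using trans by blast
    then show "z \<in> b"
      using cond_arrowD[OF x \<open>closed W\<close> \<open>W \<subseteq> a\<close>] by simp
  qed
qed

lemma correspondence_T5:
  assumes c: "conditional_space T"
  shows "(\<forall>a b. a \<inter> cond_arrow T a b \<subseteq> b) \<longleftrightarrow> (\<forall>x. T x {x} x)"
proof (intro iffI allI subsetI)
  fix x assume "\<forall>a b. a \<inter> cond_arrow T a b \<subseteq> b"
  moreover have "x \<in> {x} \<inter> cond_arrow T {x} (Tset T x {x})"
    using mem_cond_arrow_Tset[OF c conditional_space_closed_singleton[OF c]] by blast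
  ultimately have "x \<in> Tset T x {x}"
    by blast
  then show "T x {x} x"
    by simp
next
  fix a b x assume "\<forall>x. T x {x} x" and x: "x \<in> a \<inter> cond_arrow T a b"
  then show "x \<in> b"
    using cond_arrowD[of x T a b "{x}" x] conditional_space_closed_singleton[OF c] by simp
qed

lemma correspondence_T6:
  assumes c: "conditional_space T"
  shows "(\<forall>a b. cond_arrow T a b \<subseteq> cond_arrow T (- b) (- a)) \<longleftrightarrow>
    (\<forall>x y Y. closed Y \<and> T x Y y \<longrightarrow> (\<exists>z\<in>Y. T x {y} z))"
proof (intro iffI allI impI subsetI)
  fix x y Y
  assume law: "\<forall>a b. cond_arrow T a b \<subseteq> cond_arrow T (- b) (- a)"
    and h: "closed Y \<and> T x Y y"
  have "x \<in> cond_arrow T {y} (Tset T x {y})"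
    using mem_cond_arrow_Tset[OF c conditional_space_closed_singleton[OF c]] .
  then have "x \<in> cond_arrow T (- Tset T x {y}) (- {y})"
    using law by blast
  then have "\<not> Y \<subseteq> - Tset T x {y}"
    using cond_arrowD[of x T _ _ Y y] h by blast
  then show "\<exists>z\<in>Y. T x {y} z"
    by auto
next
  fix a b x
  assume witness: "\<forall>x y Y. closed Y \<and> T x Y y \<longrightarrow> (\<exists>z\<in>Y. T x {y} z)"
    and x: "x \<in> cond_arrow T a b"
  show "x \<in> cond_arrow T (- b) (- a)"
  proof (intro cond_arrowI ComplI)
    fix Z w assume "closed Z" "Z \<subseteq> - b" "T x Z w" "w \<in> a"
    then obtain z where "z \<in> Z" "T x {w} z"
      using witness by blast
    then have "z \<in> b"
      using cond_arrowD[OF x conditional_space_closed_singleton[OF c]] \<open>w \<in> a\<close> by simp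
    then show False
      using \<open>z \<in> Z\<close> \<open>Z \<subseteq> - b\<close> by blast
  qed
qed

lemma correspondence_T7:
  assumes c: "conditional_space T"
  shows "(\<forall>a b c. - cond_arrow T a b \<subseteq> cond_arrow T c (- cond_arrow T a b)) \<longleftrightarrow>
    (\<forall>x y z Y Z. closed Y \<and> closed Z \<and> T x Y y \<and> T x Z z \<longrightarrow> T y Z z)"
proof (intro iffI allI impI subsetI)
  fix x y z Y Z
  assume law: "\<forall>a b c. - cond_arrow T a b \<subseteq> cond_arrow T c (- cond_arrow T a b)"
    and h: "closed Y \<and> closed Z \<and> T x Y y \<and> T x Z z"
  show "T y Z z"
  proof (rule ccontr)
    assume "\<not> T y Z z"
    then have "x \<notin> cond_arrow T Z (Tset T y Z)"
      using cond_arrowD[of x T Z "Tset T y Z" Z z] h by auto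
    then have "x \<in> cond_arrow T Y (- cond_arrow T Z (Tset T y Z))"
      using law by blast
    then have "y \<notin> cond_arrow T Z (Tset T y Z)"
      using cond_arrowD[of x T Y _ Y y] h by blast
    then show False
      using mem_cond_arrow_Tset[OF c] h by blast
  qed
next
  fix a b d x
  assume eucl: "\<forall>x y z Y Z. closed Y \<and> closed Z \<and> T x Y y \<and> T x Z z \<longrightarrow> T y Z z"
    and "x \<in> - cond_arrow T a b"
  then obtain W w where W: "closed W" "W \<subseteq> a" "T x W w" "w \<notin> b"
    using cond_arrowI[of a T x b] by blast
  show "x \<in> cond_arrow T d (- cond_arrow T a b)"
  proof (intro cond_arrowI ComplI)
    fix Y y assume "closed Y" "T x Y y" "y \<in> cond_arrow T a b"
    then have "w \<in> b"
      using eucl W cond_arrowD[of y T a b W w] by blast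
    then show False
      using \<open>w \<notin> b\<close> by blast
  qed
qed

lemma correspondence_T8:
  assumes c: "conditional_space T"
  shows "(\<forall>a b c. cond_arrow T UNIV (- a \<union> b) \<inter> cond_arrow T b c \<subseteq> cond_arrow T a c) \<longleftrightarrow>
    (\<forall>x y Y Z. closed Y \<and> closed Z \<and> T x Y y \<and> Tset T x UNIV \<inter> Y \<subseteq> Z \<longrightarrow> T x Z y)"
proof (intro iffI allI impI subsetI)
  fix x y Y Z
  assume law: "\<forall>a b c. cond_arrow T UNIV (- a \<union> b) \<inter> cond_arrow T b c \<subseteq> cond_arrow T a c"
    and h: "closed Y \<and> closed Z \<and> T x Y y \<and> Tset T x UNIV \<inter> Y \<subseteq> Z"
  have "Tset T x UNIV \<subseteq> - Y \<union> Z"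
    using h by blast
  then have "x \<in> cond_arrow T UNIV (- Y \<union> Z)"
    by (simp add: mem_cond_arrow_closed_iff[OF c closed_UNIV])
  moreover have "x \<in> cond_arrow T Z (Tset T x Z)"
    using mem_cond_arrow_Tset[OF c] h by simp
  ultimately have "x \<in> cond_arrow T Y (Tset T x Z)"
    using law by blast
  then show "T x Z y"
    using cond_arrowD[of x T Y "Tset T x Z" Y y] h by simp
next
  fix a b d x
  assume restrict: "\<forall>x y Y Z. closed Y \<and> closed Z \<and> T x Y y \<and> Tset T x UNIV \<inter> Y \<subseteq> Z \<longrightarrow> T x Z y"
    and x: "x \<in> cond_arrow T UNIV (- a \<union> b) \<inter> cond_arrow T b d"
  show "x \<in> cond_arrow T a d"
  proof (intro cond_arrowI)
    fix W y assume "closed W" "W \<subseteq> a" "T x W y"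
    let ?Z = "Tset T x UNIV \<inter> W"
    have "closed ?Z"
      by (intro closed_Int conditional_space_closed_Tset[OF c closed_UNIV] \<open>closed W\<close>)
    have "Tset T x UNIV \<subseteq> - a \<union> b"
      using x by (simp add: mem_cond_arrow_closed_iff[OF c closed_UNIV])
    then have "?Z \<subseteq> b"
      using \<open>W \<subseteq> a\<close> by blast
    moreover have "T x ?Z y"
      using restrict \<open>closed ?Z\<close> \<open>closed W\<close> \<open>T x W y\<close> by blast
    ultimately show "y \<in> d"
      using cond_arrowD[of x T b d ?Z y] x \<open>closed ?Z\<close> by blast
  qed
qed

theorem theorem9p9:
  fixes T :: "'a::topological_space \<Rightarrow> 'a set \<Rightarrow> 'a \<Rightarrow> bool"
  assumes "conditional_space T"
  shows
   "((\<forall>a b c. cond_arrow T a c \<inter> cond_arrow T b c \<subseteq> cond_arrow T (a \<union> b) c) \<longleftrightarrow>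
      (\<forall>x y Y. closed Y \<and> Y \<noteq> {} \<and> T x Y y \<longrightarrow> (\<exists>z\<in>Y. T x {z} y)))
  \<and> ((\<forall>a b c. cond_arrow T a b \<subseteq> cond_arrow T c (cond_arrow T a b)) \<longleftrightarrow>
      (\<forall>x y z Y Z. closed Y \<and> closed Z \<and> T x Y y \<and> T y Z z \<longrightarrow> T x Z z))
  \<and> ((\<forall>a b. a \<inter> cond_arrow T a b \<subseteq> b) \<longleftrightarrow> (\<forall>x. T x {x} x))
  \<and> ((\<forall>a b. cond_arrow T a b \<subseteq> cond_arrow T (- b) (- a)) \<longleftrightarrow>
      (\<forall>x y Y. closed Y \<and> T x Y y \<longrightarrow> (\<exists>z\<in>Y. T x {y} z)))
  \<and> ((\<forall>a b c. - cond_arrow T a b \<subseteq> cond_arrow T c (- cond_arrow T a b)) \<longleftrightarrow>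
      (\<forall>x y z Y Z. closed Y \<and> closed Z \<and> T x Y y \<and> T x Z z \<longrightarrow> T y Z z))
  \<and> ((\<forall>a b c. cond_arrow T UNIV (- a \<union> b) \<inter> cond_arrow T b c \<subseteq> cond_arrow T a c) \<longleftrightarrow>
      (\<forall>x y Y Z. closed Y \<and> closed Z \<and> T x Y y \<and> Tset T x UNIV \<inter> Y \<subseteq> Z \<longrightarrow> T x Z y))"
  by (intro conjI correspondence_T3_star[OF assms] correspondence_T4[OF assms]
      correspondence_T5[OF assms] correspondence_T6[OF assms]
      correspondence_T7[OF assms] correspondence_T8[OF assms])

end
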